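(* Let $n,m\ge 1$. The number of plane labelled bipartite trees with $n$ white vertices and $m$ black vertices equals $$\frac{\bigl((n+m-2)!\bigr)^2}{(n-1)!\,(m-1)!}.$$
   Context: A plane tree is a finite tree embedded in the oriented plane. Two such trees are identified if an orientation-preserving homeomorphism of the plane carries one onto the other; equivalently, a plane tree is a tree together with a cyclic order of the edges at each vertex. A bipartite tree is a tree whose vertices are colored black and white so that adjacent vertices have different colors. A plane labelled bipartite tree with $n$ white and $m$ black vertices is a plane bipartite tree in which the white vertices carry the distinct labels $v_1,\dots,v_n$ and the black vertices carry the distinct labels $u_1,\dots,u_m$ (each label used exactly once). Two such labelled trees are identified if an orientation-preserving homeomorphism of the plane maps one onto the other, preserving colors and labels. Such a tree has $n+m-1$ edges. *)

theory Defs
  imports Complex_Main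
begin

text \<open>White vertex v_(i+1) is represented by Inl i (i < n), black vertex u_(j+1) by Inr j (j < m).
  An (undirected, simple) bipartite graph is given by its edge set E, a subset of {..<n} x {..<m}.\<close>

definition bip_vertices :: "nat \<Rightarrow> nat \<Rightarrow> (nat + nat) set" where
  "bip_vertices n m = Inl ` {..<n} \<union> Inr ` {..<m}"

definition bip_adj :: "(nat \<times> nat) set \<Rightarrow> (nat + nat) rel" where
  "bip_adj E = {(Inl i, Inr j) | i j. (i, j) \<in> E} \<union> {(Inr j, Inl i) | i j. (i, j) \<in> E}"

definition is_bip_tree :: "nat \<Rightarrow> nat \<Rightarrow> (nat \<times> nat) set \<Rightarrow> bool" where
  "is_bip_tree n m E \<longleftrightarrow>
     E \<subseteq> {..<n} \<times> {..<m} \<and>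
     (\<forall>u\<in>bip_vertices n m. \<forall>v\<in>bip_vertices n m. (u, v) \<in> (bip_adj E)\<^sup>*) \<and>
     \<not> (\<exists>vs. length vs \<ge> 3 \<and> distinct vs \<and>
           (\<forall>k<length vs. (vs ! k, vs ! ((k + 1) mod length vs)) \<in> bip_adj E))"

text \<open>A cyclic order on a finite set S, encoded as its successor map: a permutation of S
  consisting of a single cycle (identity outside S).\<close>
definition cyclic_order_on :: "'a set \<Rightarrow> ('a \<Rightarrow> 'a) \<Rightarrow> bool" where
  "cyclic_order_on S \<sigma> \<longleftrightarrow>
     bij_betw \<sigma> S S \<and> (\<forall>x. x \<notin> S \<longrightarrow> \<sigma> x = x) \<and>
     (\<forall>x\<in>S. \<forall>y\<in>S. \<exists>k. (\<sigma> ^^ k) x = y)"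

text \<open>Plane labelled bipartite trees: a labelled bipartite tree together with a cyclic order of
  the edges at each vertex (edges at white vertex i are identified with the black neighbours j,
  and conversely).  Since all vertices are labelled, two such data give the same plane labelled tree
  iff they are equal.\<close>
definition plane_labelled_bip_trees ::
  "nat \<Rightarrow> nat \<Rightarrow> ((nat \<times> nat) set \<times> (nat \<Rightarrow> nat \<Rightarrow> nat) \<times> (nat \<Rightarrow> nat \<Rightarrow> nat)) set" where
  "plane_labelled_bip_trees n m =
     {(E, rw, rb). is_bip_tree n m E \<and>
        (\<forall>i<n. cyclic_order_on {j. (i, j) \<in> E} (rw i)) \<and> (\<forall>i. n \<le> i \<longrightarrow> rw i = id) \<and>
        (\<forall>j<m. cyclic_order_on {i. (i, j) \<in> E} (rb j)) \<and> (\<forall>j. m \<le> j \<longrightarrow> rb j = id)}"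

end

theory Submission
  imports Defs "HOL-Combinatorics.Permutations"
begin

text \<open>
  Fix the degrees \<open>d\<close> of the white and \<open>e\<close> of the black vertices. If all degrees are positive
  and both sum to the number \<open>n + m - 1\<close> of edges, there are exactly \<open>(n - 1)! (m - 1)!\<close>
  plane trees with these degrees, otherwise none. This is proved by induction on \<open>n + m\<close>:
  a white leaf \<open>i\<close> hangs on a black vertex \<open>j\<close> of degree \<open>e j \<ge> 2\<close>; removing it gives a plane
  tree in which \<open>j\<close> has degree \<open>e j - 1\<close>, and conversely the leaf can be put back into the cyclic
  order around \<open>j\<close> in \<open>e j - 1\<close> ways. Since the numbers \<open>e j - 1\<close> sum to \<open>n - 1\<close>, this gives
  \<open>(n - 1) (n - 2)! (m - 1)!\<close>. If only black leaves are available the colours are swapped, and if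
  no leaf is available the degrees are not admissible.
  An admissible degree sequence of either colour is a composition of \<open>n + m - 1\<close>, so there are
  \<open>C(n + m - 2, n - 1) C(n + m - 2, m - 1)\<close> pairs of them, and
  \<open>C(n + m - 2, n - 1) (n - 1)! (m - 1)! = (n + m - 2)!\<close>.
\<close>

section \<open>Cyclic orders\<close>

definition succ_graph :: "('a \<Rightarrow> 'a) \<Rightarrow> 'a rel" where
  "succ_graph f = {(x, f x) | x. True}"

lemma in_succ_graph_iff [simp]: "(x, y) \<in> succ_graph f \<longleftrightarrow> y = f x"
  by (auto simp: succ_graph_def)

lemma funpow_reaches_iff_rtrancl: "(\<exists>k. (f ^^ k) x = y) \<longleftrightarrow> (x, y) \<in> (succ_graph f)\<^sup>*"
proof
  assume "\<exists>k. (f ^^ k) x = y"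
  then obtain k where "(f ^^ k) x = y" by blast
  moreover have "(x, (f ^^ k) x) \<in> (succ_graph f)\<^sup>*" for k
    by (induction k) (auto intro: rtrancl_into_rtrancl)
  ultimately show "(x, y) \<in> (succ_graph f)\<^sup>*" by blast
next
  assume "(x, y) \<in> (succ_graph f)\<^sup>*"
  then show "\<exists>k. (f ^^ k) x = y"
  proof (induction rule: rtrancl_induct)
    case base
    show ?case by (rule exI[of _ 0]) simp
  next
    case (step y z)
    then obtain k where "(f ^^ k) x = y" by blast
    with step show ?case by (intro exI[of _ "Suc k"]) simp
  qed
qed

lemma cyclic_order_on_iff_permutes:
  "cyclic_order_on S \<sigma> \<longleftrightarrow> \<sigma> permutes S \<and> (\<forall>x\<in>S. \<forall>y\<in>S. (x, y) \<in> (succ_graph \<sigma>)\<^sup>*)"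
  unfolding cyclic_order_on_def funpow_reaches_iff_rtrancl
  by (metis bij_imp_permutes permutes_imp_bij permutes_not_in)

lemma cyclic_order_on_permutes: "cyclic_order_on S \<sigma> \<Longrightarrow> \<sigma> permutes S"
  by (simp add: cyclic_order_on_iff_permutes)

lemma cyclic_order_on_singleton_iff: "cyclic_order_on {a} \<sigma> \<longleftrightarrow> \<sigma> = id"
  unfolding cyclic_order_on_def by (auto simp: bij_betw_def fun_eq_iff intro: exI[of _ 0])

lemma rtrancl_map:
  assumes "(a, b) \<in> r\<^sup>*" and "\<And>y z. (y, z) \<in> r \<Longrightarrow> (h y, h z) \<in> s\<^sup>*"
  shows "(h a, h b) \<in> s\<^sup>*"
  using assms(1) by induction (auto intro: rtrancl_trans assms(2))

lemma rtrancl_succ_graph_fixpoint: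
  assumes "(x, y) \<in> (succ_graph f)\<^sup>*" and "f x = x"
  shows "y = x"
  using assms by induction auto

lemma rtrancl_first_step:
  assumes "(a, b) \<in> r\<^sup>*" and "a \<noteq> b"
  obtains c where "(a, c) \<in> r"
  using assms by (metis converse_rtranclE)

text \<open>For \<open>\<sigma>\<close> fixing \<open>x\<close>, the map \<open>\<sigma> \<circ> transpose p x\<close> sends \<open>p\<close> to \<open>x\<close> and \<open>x\<close> to \<open>\<sigma> p\<close>:
  it inserts \<open>x\<close> into the cyclic order directly after \<open>p\<close>.\<close>

lemma cyclic_order_on_insert:
  assumes \<sigma>: "cyclic_order_on S \<sigma>" and x: "x \<notin> S" and p: "p \<in> S"
  shows "cyclic_order_on (insert x S) (\<sigma> \<circ> transpose p x)"
proof -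
  let ?\<tau> = "\<sigma> \<circ> transpose p x"
  have perm: "\<sigma> permutes S" and reach: "\<And>a b. a \<in> S \<Longrightarrow> b \<in> S \<Longrightarrow> (a, b) \<in> (succ_graph \<sigma>)\<^sup>*"
    using \<sigma> unfolding cyclic_order_on_iff_permutes by auto
  have px: "p \<noteq> x" and \<sigma>x: "\<sigma> x = x" and \<sigma>p: "\<sigma> p \<in> S"
    using p x permutes_not_in[OF perm] permutes_in_image[OF perm] by auto
  have "?\<tau> permutes insert x S"
    using permutes_subset[OF perm] p by (intro permutes_compose permutes_swap_id) auto
  moreover have "(y, \<sigma> y) \<in> (succ_graph ?\<tau>)\<^sup>*" for y
  proof (cases "y = p")
    case True
    then have "(y, x) \<in> succ_graph ?\<tau>" "(x, \<sigma> y) \<in> succ_graph ?\<tau>" using \<sigma>x px by auto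
    then show ?thesis by (meson converse_rtrancl_into_rtrancl r_into_rtrancl)
  next
    case False
    then have "y = x \<or> (y, \<sigma> y) \<in> succ_graph ?\<tau>" by (auto simp: transpose_def)
    then show ?thesis using \<sigma>x by auto
  qed
  then have reach': "(a, b) \<in> (succ_graph ?\<tau>)\<^sup>*" if "a \<in> S" "b \<in> S" for a b
    using rtrancl_map[where h = id, OF reach[OF that]] by simp
  have to_x: "(p, x) \<in> succ_graph ?\<tau>" and from_x: "(x, \<sigma> p) \<in> succ_graph ?\<tau>"
    using \<sigma>x px by auto
  have "(a, x) \<in> (succ_graph ?\<tau>)\<^sup>* \<and> (x, a) \<in> (succ_graph ?\<tau>)\<^sup>*" if "a \<in> insert x S" for a
    using that rtrancl_into_rtrancl[OF reach'[OF _ p] to_x]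
      converse_rtrancl_into_rtrancl[OF from_x reach'[OF \<sigma>p]] by auto
  then have "\<forall>a\<in>insert x S. \<forall>b\<in>insert x S. (a, b) \<in> (succ_graph ?\<tau>)\<^sup>*"
    by (meson rtrancl_trans)
  ultimately show ?thesis unfolding cyclic_order_on_iff_permutes by blast
qed

text \<open>Conversely, removing \<open>x\<close> from a cyclic order \<open>\<tau>\<close> collapses the two steps
  \<open>p \<mapsto> x \<mapsto> \<tau> x\<close> from its predecessor \<open>p\<close> into one.\<close>

lemma cyclic_order_on_remove:
  assumes \<tau>: "cyclic_order_on (insert x S) \<tau>" and x: "x \<notin> S" and S: "S \<noteq> {}"
  obtains p where "p \<in> S" "\<tau> p = x" "cyclic_order_on S (\<tau> \<circ> transpose p x)"
proof -
  have perm: "\<tau> permutes insert x S"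
    and reach: "\<And>a b. a \<in> insert x S \<Longrightarrow> b \<in> insert x S \<Longrightarrow> (a, b) \<in> (succ_graph \<tau>)\<^sup>*"
    using \<tau> unfolding cyclic_order_on_iff_permutes by auto
  define p where "p = inv \<tau> x"
  have \<tau>p: "\<tau> p = x" and pred: "\<And>z. \<tau> z = x \<Longrightarrow> z = p"
    unfolding p_def using permutes_inverses[OF perm] by metis+
  have "\<tau> x \<noteq> x"
  proof
    assume "\<tau> x = x"
    moreover obtain s where "s \<in> S" using S by blast
    ultimately show False using rtrancl_succ_graph_fixpoint[OF reach] x by blast
  qed
  then have pS: "p \<in> S" using \<tau>p permutes_in_image[OF perm, of p] by auto
  let ?\<sigma> = "\<tau> \<circ> transpose p x"
  have "?\<sigma> permutes insert x S"
    using perm pS by (intro permutes_compose permutes_swap_id) auto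
  then have perm': "?\<sigma> permutes S"
    by (rule permutes_superset) (use \<tau>p in auto)
  define h where "h z = (if z = x then p else z)" for z
  have "(h y, h z) \<in> (succ_graph ?\<sigma>)\<^sup>*" if "(y, z) \<in> succ_graph \<tau>" for y z
  proof -
    have z: "z = \<tau> y" using that by simp
    consider "y = x" | "y = p" | "y \<noteq> x" "y \<noteq> p" by blast
    then show ?thesis
    proof cases
      case 1
      then show ?thesis using \<open>\<tau> x \<noteq> x\<close> pS x z by (auto simp: h_def)
    next
      case 2
      then show ?thesis using \<tau>p z by (simp add: h_def)
    next
      case 3
      then have "\<tau> y \<noteq> x" using pred by blast
      then show ?thesis using 3 z by (auto simp: h_def)
    qed
  qed
  then have "(h a, h b) \<in> (succ_graph ?\<sigma>)\<^sup>*" if "a \<in> S" "b \<in> S" for a b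
    using rtrancl_map[where h = h, OF reach] that by blast
  moreover have "h a = a" if "a \<in> S" for a using that x by (auto simp: h_def)
  ultimately have "\<forall>a\<in>S. \<forall>b\<in>S. (a, b) \<in> (succ_graph ?\<sigma>)\<^sup>*" by metis
  with perm' have "cyclic_order_on S ?\<sigma>" unfolding cyclic_order_on_iff_permutes by blast
  with pS \<tau>p show thesis by (intro that)
qed

lemma permutes_comp_transpose_cancel:
  assumes \<sigma>: "\<sigma> permutes S" and \<sigma>': "\<sigma>' permutes S" and x: "x \<notin> S"
    and eq: "\<sigma> \<circ> transpose p x = \<sigma>' \<circ> transpose p' x"
  shows "p = p'" and "\<sigma> = \<sigma>'"
proof -
  have "(\<sigma>' \<circ> transpose p' x) p = (\<sigma>' \<circ> transpose p' x) p'"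
    using fun_cong[OF eq, of p] permutes_not_in[OF \<sigma> x] permutes_not_in[OF \<sigma>' x] by simp
  moreover have "inj (\<sigma>' \<circ> transpose p' x)"
    using permutes_inj[OF \<sigma>'] by (simp add: inj_compose)
  ultimately show "p = p'" by (rule injD[rotated])
  then have "\<sigma> \<circ> transpose p x \<circ> transpose p x = \<sigma>' \<circ> transpose p x \<circ> transpose p x"
    using eq by simp
  then show "\<sigma> = \<sigma>'" by (simp add: comp_assoc)
qed

section \<open>Bipartite trees on arbitrary label sets\<close>

definition bip_verts :: "nat set \<Rightarrow> nat set \<Rightarrow> (nat + nat) set" where
  "bip_verts W B = Inl ` W \<union> Inr ` B"

definition bip_cycle :: "(nat \<times> nat) set \<Rightarrow> (nat + nat) list \<Rightarrow> bool" where
  "bip_cycle E vs \<longleftrightarrow> 3 \<le> length vs \<and> distinct vs \<and>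
     (\<forall>k<length vs. (vs ! k, vs ! ((k + 1) mod length vs)) \<in> bip_adj E)"

definition bip_acyclic :: "(nat \<times> nat) set \<Rightarrow> bool" where
  "bip_acyclic E \<longleftrightarrow> \<not> (\<exists>vs. bip_cycle E vs)"

definition bip_tree :: "nat set \<Rightarrow> nat set \<Rightarrow> (nat \<times> nat) set \<Rightarrow> bool" where
  "bip_tree W B E \<longleftrightarrow> E \<subseteq> W \<times> B \<and>
     (\<forall>u\<in>bip_verts W B. \<forall>v\<in>bip_verts W B. (u, v) \<in> (bip_adj E)\<^sup>*) \<and> bip_acyclic E"

definition nbrs_white :: "(nat \<times> nat) set \<Rightarrow> nat \<Rightarrow> nat set" where
  "nbrs_white E i = {j. (i, j) \<in> E}"

definition nbrs_black :: "(nat \<times> nat) set \<Rightarrow> nat \<Rightarrow> nat set" where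
  "nbrs_black E j = {i. (i, j) \<in> E}"

lemma is_bip_tree_iff: "is_bip_tree n m E \<longleftrightarrow> bip_tree {..<n} {..<m} E"
  unfolding is_bip_tree_def bip_tree_def bip_acyclic_def bip_cycle_def bip_verts_def bip_vertices_def
  by simp

lemma bip_adj_iff: "(u, v) \<in> bip_adj E \<longleftrightarrow>
    (\<exists>i j. (i, j) \<in> E \<and> ((u = Inl i \<and> v = Inr j) \<or> (u = Inr j \<and> v = Inl i)))"
  unfolding bip_adj_def by blast

lemma bip_adj_simps [simp]:
  "(Inl i, Inr j) \<in> bip_adj E \<longleftrightarrow> (i, j) \<in> E"
  "(Inr j, Inl i) \<in> bip_adj E \<longleftrightarrow> (i, j) \<in> E"
  "(Inl i, Inl i') \<notin> bip_adj E"
  "(Inr j, Inr j') \<notin> bip_adj E"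
  unfolding bip_adj_iff by auto

lemma bip_adj_irrefl: "(v, v) \<notin> bip_adj E"
  unfolding bip_adj_iff by auto

lemma bip_adj_sym: "(u, v) \<in> bip_adj E \<Longrightarrow> (v, u) \<in> bip_adj E"
  unfolding bip_adj_iff by auto

lemma converse_bip_adj: "converse (bip_adj E) = bip_adj E"
  using bip_adj_sym by auto

lemma rtrancl_bip_adj_sym: "(u, v) \<in> (bip_adj E)\<^sup>* \<Longrightarrow> (v, u) \<in> (bip_adj E)\<^sup>*"
  by (metis converse_bip_adj rtrancl_converseI)

lemma bip_adj_mono: "E \<subseteq> E' \<Longrightarrow> bip_adj E \<subseteq> bip_adj E'"
  unfolding bip_adj_def by blast

lemma bip_adj_in_verts: "E \<subseteq> W \<times> B \<Longrightarrow> (u, v) \<in> bip_adj E \<Longrightarrow> u \<in> bip_verts W B \<and> v \<in> bip_verts W B"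
  unfolding bip_adj_iff bip_verts_def by auto

lemma card_nbrs_white: "card (nbrs_white E i) = card {v. (Inl i, v) \<in> bip_adj E}"
proof -
  have "{v. (Inl i, v) \<in> bip_adj E} = Inr ` nbrs_white E i"
    unfolding bip_adj_iff nbrs_white_def by auto
  then show ?thesis by (simp add: card_image)
qed

lemma card_nbrs_black: "card (nbrs_black E j) = card {v. (Inr j, v) \<in> bip_adj E}"
proof -
  have "{v. (Inr j, v) \<in> bip_adj E} = Inl ` nbrs_black E j"
    unfolding bip_adj_iff nbrs_black_def by auto
  then show ?thesis by (simp add: card_image)
qed

lemma nbrs_white_insert:
  "nbrs_white (insert (a, b) E) x = (if x = a then insert b (nbrs_white E x) else nbrs_white E x)"
  unfolding nbrs_white_def by auto

lemma nbrs_black_insert: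
  "nbrs_black (insert (a, b) E) y = (if y = b then insert a (nbrs_black E y) else nbrs_black E y)"
  unfolding nbrs_black_def by auto

lemma nbrs_white_Diff:
  "nbrs_white (E - {(a, b)}) x = (if x = a then nbrs_white E x - {b} else nbrs_white E x)"
  unfolding nbrs_white_def by auto

lemma nbrs_black_Diff:
  "nbrs_black (E - {(a, b)}) y = (if y = b then nbrs_black E y - {a} else nbrs_black E y)"
  unfolding nbrs_black_def by auto

lemma nbrs_white_eq_empty: "E \<subseteq> W \<times> B \<Longrightarrow> i \<notin> W \<Longrightarrow> nbrs_white E i = {}"
  unfolding nbrs_white_def by blast

lemma nbrs_black_eq_empty: "E \<subseteq> W \<times> B \<Longrightarrow> j \<notin> B \<Longrightarrow> nbrs_black E j = {}"
  unfolding nbrs_black_def by blast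

lemma bip_acyclic_mono: "bip_acyclic E \<Longrightarrow> E' \<subseteq> E \<Longrightarrow> bip_acyclic E'"
  unfolding bip_acyclic_def bip_cycle_def using bip_adj_mono by blast

lemma bip_cycle_two_nbrs:
  assumes "bip_cycle E vs" and "a < length vs"
  obtains b c where "b < length vs" "c < length vs" "vs ! b \<noteq> vs ! c"
    "(vs ! b, vs ! a) \<in> bip_adj E" "(vs ! a, vs ! c) \<in> bip_adj E"
proof -
  let ?L = "length vs"
  have L: "3 \<le> ?L" and dist: "distinct vs"
    and cyc: "\<And>k. k < ?L \<Longrightarrow> (vs ! k, vs ! ((k + 1) mod ?L)) \<in> bip_adj E"
    using assms(1) unfolding bip_cycle_def by auto
  define b where "b = (if a = 0 then ?L - 1 else a - 1)"
  have b: "b < ?L" "(b + 1) mod ?L = a" using assms(2) L unfolding b_def by auto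
  have c: "(a + 1) mod ?L < ?L" using L by (intro mod_less_divisor) linarith
  have "b \<noteq> (a + 1) mod ?L"
  proof (cases "a + 1 < ?L")
    case False
    then have "a + 1 = ?L" using assms(2) by simp
    then show ?thesis using L unfolding b_def by auto
  qed (use L in \<open>auto simp: b_def\<close>)
  then show thesis
    using that[OF b(1) c] cyc[OF b(1)] cyc[OF assms(2)] b(2) dist b(1) c
    by (simp add: nth_eq_iff_index_eq)
qed

lemma bip_acyclic_insert_leaf:
  assumes acyc: "bip_acyclic E" and leaf: "\<And>j'. (i, j') \<notin> E"
  shows "bip_acyclic (insert (i, j) E)"
  unfolding bip_acyclic_def
proof
  let ?E = "insert (i, j) E"
  assume "\<exists>vs. bip_cycle ?E vs"
  then obtain vs where cyc: "bip_cycle ?E vs" by blast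
  have only_j: "v = Inr j" if "(Inl i, v) \<in> bip_adj ?E \<or> (v, Inl i) \<in> bip_adj ?E" for v
    using that leaf unfolding bip_adj_iff by auto
  show False
  proof (cases "Inl i \<in> set vs")
    case True
    then obtain a where "a < length vs" "vs ! a = Inl i" by (metis in_set_conv_nth)
    then show False
      using bip_cycle_two_nbrs[OF cyc] only_j by metis
  next
    case False
    have "(u, v) \<in> bip_adj E" if "(u, v) \<in> bip_adj ?E" "u \<noteq> Inl i" "v \<noteq> Inl i" for u v
      using that unfolding bip_adj_iff by auto
    then have "bip_cycle E vs"
      using cyc False unfolding bip_cycle_def by (metis mod_less_divisor nth_mem zero_less_numeral
          less_le_trans)
    then show False using acyc unfolding bip_acyclic_def by blast
  qed
qed

lemma rtrancl_bip_adj_remove_leaf: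
  assumes "(Inr j, v) \<in> (bip_adj E)\<^sup>*" and leaf: "nbrs_white E i = {j}"
  shows "v = Inl i \<or> (Inr j, v) \<in> (bip_adj (E - {(i, j)}))\<^sup>*"
  using assms(1)
proof induction
  case (step y z)
  show ?case
  proof (cases "y = Inl i")
    case True
    then show ?thesis using step(2) leaf unfolding bip_adj_iff nbrs_white_def by auto
  next
    case False
    with step.IH have "(Inr j, y) \<in> (bip_adj (E - {(i, j)}))\<^sup>*" by simp
    moreover have "z = Inl i \<or> (y, z) \<in> bip_adj (E - {(i, j)})"
      using step(2) False unfolding bip_adj_iff by auto
    ultimately show ?thesis by (meson rtrancl_into_rtrancl)
  qed
qed simp

lemma bip_tree_remove_leaf:
  assumes t: "bip_tree W B E" and i: "i \<in> W" and leaf: "nbrs_white E i = {j}"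
  shows "bip_tree (W - {i}) B (E - {(i, j)})"
proof -
  let ?E = "E - {(i, j)}"
  have sub: "E \<subseteq> W \<times> B" and conn: "\<forall>u\<in>bip_verts W B. \<forall>v\<in>bip_verts W B. (u, v) \<in> (bip_adj E)\<^sup>*"
    and acyc: "bip_acyclic E" using t unfolding bip_tree_def by auto
  have "(i, j) \<in> E" using leaf unfolding nbrs_white_def by auto
  then have j: "Inr j \<in> bip_verts W B" using sub unfolding bip_verts_def by auto
  have "?E \<subseteq> (W - {i}) \<times> B" using sub leaf unfolding nbrs_white_def by auto
  moreover have "(Inr j, u) \<in> (bip_adj ?E)\<^sup>*" if "u \<in> bip_verts (W - {i}) B" for u
    using that rtrancl_bip_adj_remove_leaf[OF _ leaf] conn j unfolding bip_verts_def by blast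
  then have "(u, v) \<in> (bip_adj ?E)\<^sup>*" if "u \<in> bip_verts (W - {i}) B" "v \<in> bip_verts (W - {i}) B" for u v
    using that rtrancl_bip_adj_sym rtrancl_trans by metis
  ultimately show ?thesis unfolding bip_tree_def using bip_acyclic_mono[OF acyc] by blast
qed

lemma bip_tree_add_leaf:
  assumes t: "bip_tree W B E" and i: "i \<notin> W" and j: "j \<in> B"
  shows "bip_tree (insert i W) B (insert (i, j) E)"
proof -
  let ?E = "insert (i, j) E"
  have sub: "E \<subseteq> W \<times> B" and conn: "\<forall>u\<in>bip_verts W B. \<forall>v\<in>bip_verts W B. (u, v) \<in> (bip_adj E)\<^sup>*"
    and acyc: "bip_acyclic E" using t unfolding bip_tree_def by auto
  have mono: "(bip_adj E)\<^sup>* \<subseteq> (bip_adj ?E)\<^sup>*" using bip_adj_mono[of E ?E] rtrancl_mono by blast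
  have "(Inl i, Inr j) \<in> (bip_adj ?E)\<^sup>*" by (simp add: r_into_rtrancl)
  moreover have "(Inr j, v) \<in> (bip_adj ?E)\<^sup>*" if "v \<in> bip_verts W B" for v
    using conn that j mono unfolding bip_verts_def by blast
  ultimately have from_i: "(Inl i, v) \<in> (bip_adj ?E)\<^sup>*" if "v \<in> bip_verts (insert i W) B" for v
    using that unfolding bip_verts_def by (auto intro: rtrancl_trans)
  have "(u, v) \<in> (bip_adj ?E)\<^sup>*" if "u \<in> bip_verts (insert i W) B" "v \<in> bip_verts (insert i W) B" for u v
    using that from_i rtrancl_bip_adj_sym rtrancl_trans by metis
  moreover have "bip_acyclic ?E"
    by (rule bip_acyclic_insert_leaf[OF acyc]) (use sub i in auto)
  moreover have "?E \<subseteq> insert i W \<times> B" using sub j by auto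
  ultimately show ?thesis unfolding bip_tree_def by blast
qed

definition bip_path :: "(nat \<times> nat) set \<Rightarrow> (nat + nat) list \<Rightarrow> bool" where
  "bip_path E vs \<longleftrightarrow> distinct vs \<and> (\<forall>k. Suc k < length vs \<longrightarrow> (vs ! k, vs ! Suc k) \<in> bip_adj E)"

lemma bip_path_snoc:
  assumes "bip_path E vs" "vs \<noteq> []" "z \<notin> set vs" "(last vs, z) \<in> bip_adj E"
  shows "bip_path E (vs @ [z])"
  using assms unfolding bip_path_def
  by (auto simp: nth_append last_conv_nth less_Suc_eq) (metis diff_Suc_Suc diff_zero)

lemma bip_path_closing_edge:
  assumes path: "bip_path E vs" and a: "a + 2 < length vs" and e: "(last vs, vs ! a) \<in> bip_adj E"
  shows "bip_cycle E (drop a vs)"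
  unfolding bip_cycle_def
proof (intro conjI allI impI)
  let ?c = "drop a vs"
  fix k assume k: "k < length ?c"
  show "(?c ! k, ?c ! ((k + 1) mod length ?c)) \<in> bip_adj E"
  proof (cases "Suc k < length ?c")
    case True
    then show ?thesis using path a unfolding bip_path_def by (simp add: add.commute)
  next
    case False
    then have "k + 1 = length ?c" "a + k = length vs - 1" using k by auto
    moreover have "last vs = vs ! (length vs - 1)" using a by (subst last_conv_nth) auto
    ultimately show ?thesis using e a by simp
  qed
qed (use path a in \<open>simp_all add: bip_path_def\<close>)

lemma bip_path_unextendable_last:
  assumes acyc: "bip_acyclic E" and path: "bip_path E vs" and len: "2 \<le> length vs"
    and maximal: "\<And>z. (last vs, z) \<in> bip_adj E \<Longrightarrow> z \<in> set vs"
  shows "{z. (last vs, z) \<in> bip_adj E} = {vs ! (length vs - 2)}"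
proof -
  have last: "last vs = vs ! (length vs - 1)" using len by (subst last_conv_nth) auto
  have "z = vs ! (length vs - 2)" if z: "(last vs, z) \<in> bip_adj E" for z
  proof -
    obtain a where a: "a < length vs" "vs ! a = z"
      using maximal z by (metis in_set_conv_nth)
    have "\<not> a + 2 < length vs"
      using bip_path_closing_edge[OF path _, of a] acyc z a unfolding bip_acyclic_def by auto
    moreover have "a \<noteq> length vs - 1"
      using z a last bip_adj_irrefl by metis
    ultimately have "a = length vs - 2" using a(1) by linarith
    with a(2) show ?thesis by simp
  qed
  moreover have "Suc (length vs - 2) < length vs" "Suc (length vs - 2) = length vs - 1" using len by auto
  then have "(vs ! (length vs - 2), last vs) \<in> bip_adj E"
    using path last unfolding bip_path_def by metis
  ultimately show ?thesis using bip_adj_sym by auto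
qed

lemma bip_tree_has_nbr:
  assumes t: "bip_tree W B E" and W: "W \<noteq> {}" and B: "B \<noteq> {}" and v: "v \<in> bip_verts W B"
  obtains z where "(v, z) \<in> bip_adj E"
proof -
  obtain a b where "Inl a \<in> bip_verts W B" "Inr b \<in> bip_verts W B"
    using W B unfolding bip_verts_def by blast
  then obtain w where "w \<in> bip_verts W B" "v \<noteq> w" by (cases "v = Inl a") auto
  moreover from this have "(v, w) \<in> (bip_adj E)\<^sup>*" using t v unfolding bip_tree_def by blast
  ultimately show thesis by (metis rtrancl_first_step that)
qed

lemma bip_tree_nbrs_nonempty:
  assumes "bip_tree W B E" "W \<noteq> {}" "B \<noteq> {}"
  shows "i \<in> W \<Longrightarrow> nbrs_white E i \<noteq> {}" and "j \<in> B \<Longrightarrow> nbrs_black E j \<noteq> {}"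
proof -
  show "nbrs_white E i \<noteq> {}" if "i \<in> W"
  proof -
    have "Inl i \<in> bip_verts W B" using that by (simp add: bip_verts_def)
    then obtain z where "(Inl i, z) \<in> bip_adj E" by (rule bip_tree_has_nbr[OF assms])
    then show ?thesis unfolding bip_adj_iff nbrs_white_def by auto
  qed
  show "nbrs_black E j \<noteq> {}" if "j \<in> B"
  proof -
    have "Inr j \<in> bip_verts W B" using that by (simp add: bip_verts_def)
    then obtain z where "(Inr j, z) \<in> bip_adj E" by (rule bip_tree_has_nbr[OF assms])
    then show ?thesis unfolding bip_adj_iff nbrs_black_def by auto
  qed
qed

lemma bip_tree_longest_path:
  assumes t: "bip_tree W B E" and fW: "finite W" and fB: "finite B" and W: "W \<noteq> {}" and B: "B \<noteq> {}"
  obtains vs where "bip_path E vs" "set vs \<subseteq> bip_verts W B" "2 \<le> length vs"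
    "\<And>z. (last vs, z) \<in> bip_adj E \<Longrightarrow> z \<in> set vs"
proof -
  have sub: "E \<subseteq> W \<times> B" using t unfolding bip_tree_def by auto
  define V where "V = bip_verts W B"
  define P where "P = {vs. bip_path E vs \<and> set vs \<subseteq> V}"
  have fV: "finite V" using fW fB unfolding V_def bip_verts_def by simp
  have bounded: "length vs < Suc (card V)" if "vs \<in> P" for vs
  proof -
    have "distinct vs" "set vs \<subseteq> V" using that unfolding P_def bip_path_def by auto
    then show ?thesis by (metis card_mono[OF fV] distinct_card le_imp_less_Suc)
  qed
  obtain u where u: "u \<in> V" using W unfolding V_def bip_verts_def by blast
  then obtain c where c: "(u, c) \<in> bip_adj E" unfolding V_def by (rule bip_tree_has_nbr[OF t W B])
  have "u \<noteq> c" using c bip_adj_irrefl by metis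
  then have "bip_path E [u, c]" using c unfolding bip_path_def by (auto simp: less_Suc_eq)
  then have uc: "[u, c] \<in> P" using u bip_adj_in_verts[OF sub c] unfolding P_def V_def by simp
  then obtain vs where vs: "vs \<in> P" and longest: "\<And>ws. ws \<in> P \<Longrightarrow> length ws \<le> length vs"
    using ex_has_greatest_nat[of "\<lambda>vs. vs \<in> P" "[u, c]" length] bounded by blast
  have len: "2 \<le> length vs" using longest[OF uc] by simp
  have path: "bip_path E vs" and inV: "set vs \<subseteq> V" using vs unfolding P_def by auto
  have "z \<in> set vs" if e: "(last vs, z) \<in> bip_adj E" for z
  proof (rule ccontr)
    assume "z \<notin> set vs"
    moreover have "vs \<noteq> []" using len by auto
    ultimately have "bip_path E (vs @ [z])" using bip_path_snoc path e by blast
    moreover have "z \<in> V" using bip_adj_in_verts[OF sub e] unfolding V_def by blast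
    ultimately have "vs @ [z] \<in> P" using inV unfolding P_def by simp
    then show False using longest[of "vs @ [z]"] by simp
  qed
  with path inV len show thesis unfolding V_def by (intro that)
qed

lemma bip_tree_leaf_exists:
  assumes t: "bip_tree W B E" and "finite W" "finite B" "W \<noteq> {}" "B \<noteq> {}"
  shows "(\<exists>i\<in>W. card (nbrs_white E i) = 1) \<or> (\<exists>j\<in>B. card (nbrs_black E j) = 1)"
proof -
  obtain vs where path: "bip_path E vs" and inV: "set vs \<subseteq> bip_verts W B" and len: "2 \<le> length vs"
    and maximal: "\<And>z. (last vs, z) \<in> bip_adj E \<Longrightarrow> z \<in> set vs"
    using bip_tree_longest_path[OF assms] by blast
  have acyc: "bip_acyclic E" using t unfolding bip_tree_def by blast
  have "card {z. (last vs, z) \<in> bip_adj E} = 1"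
    using bip_path_unextendable_last[OF acyc path len maximal] by simp
  moreover have "last vs \<in> bip_verts W B" using inV len by (metis last_in_set list.size(3)
      not_numeral_le_zero subsetD)
  ultimately show ?thesis
    unfolding bip_verts_def card_nbrs_white card_nbrs_black by (elim UnE imageE) auto
qed

lemma bip_tree_removable_leaf_exists:
  assumes t: "bip_tree W B E" and fW: "finite W" and fB: "finite B" and W: "W \<noteq> {}" and B: "B \<noteq> {}"
    and not_edge: "\<not> (card W = 1 \<and> card B = 1)"
  shows "(\<exists>i\<in>W. card (nbrs_white E i) = 1 \<and> 2 \<le> card W) \<or> (\<exists>j\<in>B. card (nbrs_black E j) = 1 \<and> 2 \<le> card B)"
proof -
  have cW: "card W > 0" and cB: "card B > 0" using fW fB W B by (simp_all add: card_gt_0_iff)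
  consider "card W = 1" | "card B = 1" | "2 \<le> card W" "2 \<le> card B" using cW cB by linarith
  then show ?thesis
  proof cases
    case 1
    then obtain w where "W = {w}" by (meson card_1_singletonE)
    moreover obtain j where j: "j \<in> B" using B by blast
    ultimately have "nbrs_black E j \<subseteq> {w}" using t unfolding bip_tree_def nbrs_black_def by blast
    then have "nbrs_black E j = {w}" using bip_tree_nbrs_nonempty(2)[OF t W B j] by blast
    then have "card (nbrs_black E j) = 1 \<and> 2 \<le> card B" using 1 not_edge cB by simp
    with j show ?thesis by blast
  next
    case 2
    then obtain b where "B = {b}" by (meson card_1_singletonE)
    moreover obtain i where i: "i \<in> W" using W by blast
    ultimately have "nbrs_white E i \<subseteq> {b}" using t unfolding bip_tree_def nbrs_white_def by blast
    then have "nbrs_white E i = {b}" using bip_tree_nbrs_nonempty(1)[OF t W B i] by blast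
    then have "card (nbrs_white E i) = 1 \<and> 2 \<le> card W" using 2 not_edge cW by simp
    with i show ?thesis by blast
  next
    case 3
    then show ?thesis using bip_tree_leaf_exists[OF t fW fB W B] by blast
  qed
qed

lemma bip_tree_single_edge_iff: "bip_tree {a} {b} E \<longleftrightarrow> E = {(a, b)}"
proof
  assume t: "bip_tree {a} {b} E"
  then have "(Inl a, Inr b) \<in> (bip_adj E)\<^sup>*" unfolding bip_tree_def bip_verts_def by blast
  then obtain z where "(Inl a, z) \<in> bip_adj E" by (rule rtrancl_first_step) simp
  then have "E \<noteq> {}" unfolding bip_adj_iff by blast
  moreover have "E \<subseteq> {(a, b)}" using t unfolding bip_tree_def by auto
  ultimately show "E = {(a, b)}" by blast
next
  assume E: "E = {(a, b)}"
  have "(u, v) \<in> (bip_adj E)\<^sup>*" if "u \<in> bip_verts {a} {b}" "v \<in> bip_verts {a} {b}" for u v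
    using that E unfolding bip_verts_def by (auto intro: r_into_rtrancl)
  moreover have "\<not> bip_cycle E vs" for vs
  proof
    assume cyc: "bip_cycle E vs"
    have "set vs \<subseteq> {Inl a, Inr b}"
    proof
      fix v assume "v \<in> set vs"
      then obtain k where "k < length vs" "vs ! k = v" by (metis in_set_conv_nth)
      then show "v \<in> {Inl a, Inr b}"
        using cyc bip_adj_in_verts[of E "{a}" "{b}"] E unfolding bip_cycle_def bip_verts_def by fastforce
    qed
    then have "card (set vs) \<le> card {Inl a, Inr b :: nat + nat}" by (intro card_mono) simp_all
    then show False using cyc distinct_card unfolding bip_cycle_def by fastforce
  qed
  ultimately show "bip_tree {a} {b} E" unfolding bip_tree_def bip_acyclic_def using E by blast
qed

lemma bip_tree_isolated_edge:
  assumes t: "bip_tree W B E" and i: "i \<in> W"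
    and nbrs_i: "nbrs_white E i = {j}" and nbrs_j: "nbrs_black E j = {i}"
  shows "W = {i}"
proof -
  have closed: "v \<in> {Inl i, Inr j}" if "(Inl i, v) \<in> (bip_adj E)\<^sup>*" for v
    using that
  proof induction
    case (step y z)
    then show ?case using nbrs_i nbrs_j unfolding bip_adj_iff nbrs_white_def nbrs_black_def by auto
  qed simp
  have "(Inl i, Inl i') \<in> (bip_adj E)\<^sup>*" if "i' \<in> W" for i'
    using t i that unfolding bip_tree_def bip_verts_def by blast
  then show ?thesis using i closed by blast
qed

definition flip_colour :: "nat + nat \<Rightarrow> nat + nat" where
  "flip_colour = case_sum Inr Inl"

lemma flip_colour_simps [simp]: "flip_colour (Inl a) = Inr a" "flip_colour (Inr a) = Inl a"
  by (simp_all add: flip_colour_def)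

lemma flip_colour_flip_colour [simp]: "flip_colour (flip_colour v) = v"
  by (cases v) simp_all

lemma bip_adj_swap_iff: "(u, v) \<in> bip_adj (prod.swap ` E) \<longleftrightarrow> (flip_colour u, flip_colour v) \<in> bip_adj E"
  by (cases u; cases v) force+

lemma bip_verts_swap_iff: "v \<in> bip_verts B W \<longleftrightarrow> flip_colour v \<in> bip_verts W B"
  by (cases v) (auto simp: bip_verts_def)

lemma rtrancl_bip_adj_swap:
  "(u, v) \<in> (bip_adj E)\<^sup>* \<Longrightarrow> (flip_colour u, flip_colour v) \<in> (bip_adj (prod.swap ` E))\<^sup>*"
  by (erule rtrancl_map[where h = flip_colour]) (simp add: bip_adj_swap_iff r_into_rtrancl)

lemma bip_cycle_swap: "bip_cycle (prod.swap ` E) vs \<Longrightarrow> bip_cycle E (map flip_colour vs)"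
proof -
  assume cyc: "bip_cycle (prod.swap ` E) vs"
  have "inj_on flip_colour (set vs)" by (rule inj_onI) (metis flip_colour_flip_colour)
  moreover have "(k + 1) mod length vs < length vs" if "k < length vs" for k
    using that by (intro mod_less_divisor) auto
  ultimately show "bip_cycle E (map flip_colour vs)"
    using cyc unfolding bip_cycle_def by (simp add: distinct_map bip_adj_swap_iff)
qed

lemma bip_tree_swap:
  assumes "bip_tree W B E"
  shows "bip_tree B W (prod.swap ` E)"
proof -
  have sub: "E \<subseteq> W \<times> B" and acyc: "bip_acyclic E"
    and conn: "\<And>u v. u \<in> bip_verts W B \<Longrightarrow> v \<in> bip_verts W B \<Longrightarrow> (u, v) \<in> (bip_adj E)\<^sup>*"
    using assms unfolding bip_tree_def by auto
  have "(u, v) \<in> (bip_adj (prod.swap ` E))\<^sup>*" if "u \<in> bip_verts B W" "v \<in> bip_verts B W" for u v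
  proof -
    have "(flip_colour u, flip_colour v) \<in> (bip_adj E)\<^sup>*"
      using that bip_verts_swap_iff by (intro conn) blast+
    from rtrancl_bip_adj_swap[OF this] show ?thesis by simp
  qed
  moreover have "prod.swap ` E \<subseteq> B \<times> W" using sub by auto
  moreover have "bip_acyclic (prod.swap ` E)"
    using acyc bip_cycle_swap unfolding bip_acyclic_def by blast
  ultimately show ?thesis unfolding bip_tree_def by blast
qed

lemma nbrs_white_swap [simp]: "nbrs_white (prod.swap ` E) = nbrs_black E"
  unfolding nbrs_white_def nbrs_black_def by (rule ext) force

lemma nbrs_black_swap [simp]: "nbrs_black (prod.swap ` E) = nbrs_white E"
  unfolding nbrs_white_def nbrs_black_def by (rule ext) force

section \<open>Plane trees and leaf insertion\<close>

type_synonym plane_tree = "(nat \<times> nat) set \<times> (nat \<Rightarrow> nat \<Rightarrow> nat) \<times> (nat \<Rightarrow> nat \<Rightarrow> nat)"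

text \<open>The encoding of \<open>plane_labelled_bip_trees\<close>, but for arbitrary label sets \<open>W\<close> and \<open>B\<close>,
  so that a leaf can be removed without relabelling.\<close>

definition plane_trees :: "nat set \<Rightarrow> nat set \<Rightarrow> plane_tree set" where
  "plane_trees W B = {(E, rw, rb). bip_tree W B E \<and>
     (\<forall>i\<in>W. cyclic_order_on (nbrs_white E i) (rw i)) \<and> (\<forall>i. i \<notin> W \<longrightarrow> rw i = id) \<and>
     (\<forall>j\<in>B. cyclic_order_on (nbrs_black E j) (rb j)) \<and> (\<forall>j. j \<notin> B \<longrightarrow> rb j = id)}"

definition plane_trees_deg :: "nat set \<Rightarrow> nat set \<Rightarrow> (nat \<Rightarrow> nat) \<Rightarrow> (nat \<Rightarrow> nat) \<Rightarrow> plane_tree set" where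
  "plane_trees_deg W B d e = {T \<in> plane_trees W B.
     (\<forall>i\<in>W. card (nbrs_white (fst T) i) = d i) \<and> (\<forall>j\<in>B. card (nbrs_black (fst T) j) = e j)}"

lemma mem_plane_trees_iff:
  "(E, rw, rb) \<in> plane_trees W B \<longleftrightarrow> bip_tree W B E \<and>
     (\<forall>i\<in>W. cyclic_order_on (nbrs_white E i) (rw i)) \<and> (\<forall>i. i \<notin> W \<longrightarrow> rw i = id) \<and>
     (\<forall>j\<in>B. cyclic_order_on (nbrs_black E j) (rb j)) \<and> (\<forall>j. j \<notin> B \<longrightarrow> rb j = id)"
  by (simp add: plane_trees_def)

lemma mem_plane_trees_deg_iff:
  "(E, rw, rb) \<in> plane_trees_deg W B d e \<longleftrightarrow> (E, rw, rb) \<in> plane_trees W B \<and>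
     (\<forall>i\<in>W. card (nbrs_white E i) = d i) \<and> (\<forall>j\<in>B. card (nbrs_black E j) = e j)"
  by (simp add: plane_trees_deg_def)

lemma plane_labelled_bip_trees_eq: "plane_labelled_bip_trees n m = plane_trees {..<n} {..<m}"
  unfolding plane_labelled_bip_trees_def plane_trees_def is_bip_tree_iff nbrs_white_def nbrs_black_def
    Ball_def lessThan_iff
  by (simp add: not_less)

lemma plane_trees_edges_subset: "(E, rw, rb) \<in> plane_trees W B \<Longrightarrow> E \<subseteq> W \<times> B"
  unfolding mem_plane_trees_iff bip_tree_def by blast

lemma finite_nbrs_black: "T \<in> plane_trees W B \<Longrightarrow> finite W \<Longrightarrow> finite (nbrs_black (fst T) j)"
  by (cases T) (auto dest!: plane_trees_edges_subset simp: nbrs_black_def intro: finite_subset)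

lemma finite_plane_trees:
  assumes "finite W" "finite B"
  shows "finite (plane_trees W B)"
proof -
  let ?R = "\<lambda>X Y. {r :: nat \<Rightarrow> nat \<Rightarrow> nat. \<forall>x. (x \<in> X \<longrightarrow> r x \<in> {\<sigma>. \<sigma> permutes Y}) \<and> (x \<notin> X \<longrightarrow> r x = id)}"
  have "plane_trees W B \<subseteq> Pow (W \<times> B) \<times> ?R W B \<times> ?R B W"
  proof
    fix T assume "T \<in> plane_trees W B"
    moreover obtain E rw rb where TE: "T = (E, rw, rb)" by (cases T)
    ultimately have T: "(E, rw, rb) \<in> plane_trees W B" by simp
    then have sub: "E \<subseteq> W \<times> B" by (rule plane_trees_edges_subset)
    have "rw i permutes B" if "i \<in> W" for i
    proof -
      have "rw i permutes nbrs_white E i"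
        using T that cyclic_order_on_permutes unfolding mem_plane_trees_iff by blast
      moreover have "nbrs_white E i \<subseteq> B" using sub unfolding nbrs_white_def by blast
      ultimately show ?thesis by (rule permutes_subset)
    qed
    moreover have "rb j permutes W" if "j \<in> B" for j
    proof -
      have "rb j permutes nbrs_black E j"
        using T that cyclic_order_on_permutes unfolding mem_plane_trees_iff by blast
      moreover have "nbrs_black E j \<subseteq> W" using sub unfolding nbrs_black_def by blast
      ultimately show ?thesis by (rule permutes_subset)
    qed
    ultimately show "T \<in> Pow (W \<times> B) \<times> ?R W B \<times> ?R B W"
      using T sub unfolding mem_plane_trees_iff TE by auto
  qed
  moreover have "finite (?R W B)" "finite (?R B W)"
    using assms by (blast intro: finite_set_of_finite_funs finite_permutations)+
  ultimately show ?thesis using assms by (auto intro: finite_subset)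
qed

lemma finite_plane_trees_deg: "finite W \<Longrightarrow> finite B \<Longrightarrow> finite (plane_trees_deg W B d e)"
  unfolding plane_trees_deg_def using finite_plane_trees by simp

definition swap_colours :: "plane_tree \<Rightarrow> plane_tree" where
  "swap_colours = (\<lambda>(E, rw, rb). (prod.swap ` E, rb, rw))"

lemma swap_colours_swap_colours [simp]: "swap_colours (swap_colours T) = T"
  by (cases T) (simp add: swap_colours_def image_image)

lemma swap_colours_in_plane_trees_deg:
  assumes "T \<in> plane_trees_deg W B d e"
  shows "swap_colours T \<in> plane_trees_deg B W e d"
proof -
  obtain E rw rb where T: "T = (E, rw, rb)" by (cases T)
  from assms have "(E, rw, rb) \<in> plane_trees_deg W B d e" by (simp add: T)
  then show ?thesis
    by (simp add: T swap_colours_def mem_plane_trees_deg_iff mem_plane_trees_iff bip_tree_swap)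
qed

lemma card_plane_trees_deg_swap: "card (plane_trees_deg B W e d) = card (plane_trees_deg W B d e)"
proof -
  have "bij_betw swap_colours (plane_trees_deg W B d e) (plane_trees_deg B W e d)"
    by (rule bij_betw_byWitness[where f' = swap_colours])
      (simp_all add: image_subset_iff swap_colours_in_plane_trees_deg)
  then show ?thesis by (simp add: bij_betw_same_card)
qed

lemma plane_trees_single_edge: "plane_trees {a} {b} = {({(a, b)}, \<lambda>_. id, \<lambda>_. id)}"
proof -
  have nbrs: "nbrs_white {(a, b)} a = {b}" "nbrs_black {(a, b)} b = {a}"
    unfolding nbrs_white_def nbrs_black_def by auto
  have "T \<in> plane_trees {a} {b} \<longleftrightarrow> T = ({(a, b)}, \<lambda>_. id, \<lambda>_. id)" for T
  proof -
    obtain E rw rb where T: "T = (E, rw, rb)" by (cases T)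
    have "(E, rw, rb) \<in> plane_trees {a} {b} \<longleftrightarrow>
        E = {(a, b)} \<and> rw a = id \<and> (\<forall>i. i \<noteq> a \<longrightarrow> rw i = id) \<and> rb b = id \<and> (\<forall>j. j \<noteq> b \<longrightarrow> rb j = id)"
      unfolding mem_plane_trees_iff bip_tree_single_edge_iff
      using nbrs by (auto simp: cyclic_order_on_singleton_iff)
    also have "\<dots> \<longleftrightarrow> E = {(a, b)} \<and> rw = (\<lambda>_. id) \<and> rb = (\<lambda>_. id)"
      by (metis (mono_tags, lifting))
    finally show ?thesis by (simp add: T)
  qed
  then show ?thesis by blast
qed

definition attach_leaf :: "nat \<Rightarrow> nat \<Rightarrow> nat \<Rightarrow> plane_tree \<Rightarrow> plane_tree" where
  "attach_leaf i j p = (\<lambda>(E, rw, rb). (insert (i, j) E, rw, rb(j := rb j \<circ> transpose p i)))"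

lemma attach_leaf_in_plane_trees_deg:
  assumes fin: "finite W" and i: "i \<in> W" and di: "d i = 1" and j: "j \<in> B"
    and T: "(E, rw, rb) \<in> plane_trees_deg (W - {i}) B d (e(j := e j - 1))"
    and p: "p \<in> nbrs_black E j"
  shows "attach_leaf i j p (E, rw, rb) \<in> plane_trees_deg W B d e"
proof -
  have t: "bip_tree (W - {i}) B E" and cw: "\<forall>i'\<in>W - {i}. cyclic_order_on (nbrs_white E i') (rw i')"
    and rw_out: "\<forall>i'. i' \<notin> W - {i} \<longrightarrow> rw i' = id"
    and cb: "\<forall>j'\<in>B. cyclic_order_on (nbrs_black E j') (rb j')" and rb_out: "\<forall>j'. j' \<notin> B \<longrightarrow> rb j' = id"
    and dw: "\<forall>i'\<in>W - {i}. card (nbrs_white E i') = d i'"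
    and db: "\<forall>j'\<in>B. card (nbrs_black E j') = (e(j := e j - 1)) j'"
    using T unfolding mem_plane_trees_deg_iff mem_plane_trees_iff by blast+
  let ?E = "insert (i, j) E" and ?rb = "rb(j := rb j \<circ> transpose p i)"
  have sub: "E \<subseteq> (W - {i}) \<times> B" using t unfolding bip_tree_def by blast
  then have no_i: "nbrs_white E i = {}" and i_notin: "i \<notin> nbrs_black E j"
    unfolding nbrs_white_def nbrs_black_def by auto
  have "nbrs_black E j \<subseteq> W" using sub unfolding nbrs_black_def by blast
  then have fin_j: "finite (nbrs_black E j)" using fin by (rule finite_subset)
  with p have card_j: "card (nbrs_black E j) > 0" by (auto simp: card_gt_0_iff)
  have "bip_tree W B ?E"
    using bip_tree_add_leaf[OF t _ j, of i] i by (simp add: insert_absorb)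
  moreover have "cyclic_order_on (nbrs_white ?E i') (rw i')" if "i' \<in> W" for i'
    using that cw rw_out no_i
    by (cases "i' = i") (simp_all add: nbrs_white_insert cyclic_order_on_singleton_iff)
  moreover have "card (nbrs_white ?E i') = d i'" if "i' \<in> W" for i'
    using that dw di no_i by (cases "i' = i") (simp_all add: nbrs_white_insert)
  moreover have "cyclic_order_on (nbrs_black ?E j') (?rb j')" if "j' \<in> B" for j'
    using that cb cyclic_order_on_insert[OF _ i_notin p] by (cases "j' = j") (simp_all add: nbrs_black_insert)
  moreover have "card (nbrs_black ?E j') = e j'" if "j' \<in> B" for j'
    using that db fin_j card_j i_notin by (cases "j' = j") (simp_all add: nbrs_black_insert)
  ultimately show ?thesis
    using rw_out rb_out j by (simp add: attach_leaf_def mem_plane_trees_deg_iff mem_plane_trees_iff)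
qed

lemma attach_leaf_eqD:
  assumes eq: "attach_leaf i j p (E, rw, rb) = attach_leaf i j' p' (E', rw', rb')"
    and T: "(E, rw, rb) \<in> plane_trees W B" and T': "(E', rw', rb') \<in> plane_trees W B"
    and i: "i \<notin> W" and j: "j \<in> B"
  shows "j' = j \<and> E' = E \<and> rw' = rw \<and> rb' = rb \<and> p' = p"
proof -
  have E_eq: "insert (i, j) E = insert (i, j') E'" and rw_eq: "rw = rw'"
    and rb_eq: "rb(j := rb j \<circ> transpose p i) = rb'(j' := rb' j' \<circ> transpose p' i)"
    using eq by (simp_all add: attach_leaf_def)
  have "E \<subseteq> W \<times> B" "E' \<subseteq> W \<times> B"
    using T T' unfolding mem_plane_trees_iff bip_tree_def by blast+
  then have no_i: "(i, k) \<notin> E" "(i, k) \<notin> E'" for k using i by auto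
  have "(i, j') \<in> insert (i, j) E" using E_eq by simp
  then have jj: "j' = j" using no_i by simp
  have EE: "E' = E" using E_eq no_i unfolding jj by (simp add: insert_ident)
  have perm: "rb j permutes nbrs_black E j" "rb' j permutes nbrs_black E j"
    using T T' j unfolding mem_plane_trees_iff EE by (auto intro: cyclic_order_on_permutes)
  have i_notin: "i \<notin> nbrs_black E j" using no_i unfolding nbrs_black_def by blast
  have "rb j \<circ> transpose p i = rb' j \<circ> transpose p' i"
    using fun_cong[OF rb_eq, of j] unfolding jj by simp
  note cancel = permutes_comp_transpose_cancel[OF perm i_notin this]
  have "rb' = rb"
  proof
    fix z show "rb' z = rb z"
      using fun_cong[OF rb_eq, of z] cancel(2) unfolding jj by (cases "z = j") simp_all
  qed
  with jj EE rw_eq cancel(1) show ?thesis by simp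
qed

lemma inj_on_attach_leaf:
  "inj_on (\<lambda>(j, T, p). attach_leaf i j p T) (SIGMA j:B. SIGMA T:plane_trees (W - {i}) B. nbrs_black (fst T) j)"
proof (rule inj_onI)
  fix x y
  assume x: "x \<in> (SIGMA j:B. SIGMA T:plane_trees (W - {i}) B. nbrs_black (fst T) j)"
    and y: "y \<in> (SIGMA j:B. SIGMA T:plane_trees (W - {i}) B. nbrs_black (fst T) j)"
    and eq: "(\<lambda>(j, T, p). attach_leaf i j p T) x = (\<lambda>(j, T, p). attach_leaf i j p T) y"
  obtain j E rw rb p where xs: "x = (j, (E, rw, rb), p)" by (cases x) (metis prod_cases3)
  obtain j' E' rw' rb' p' where ys: "y = (j', (E', rw', rb'), p')" by (cases y) (metis prod_cases3)
  from x y eq show "x = y"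
    using attach_leaf_eqD[of i j p E rw rb j' p' E' rw' rb' "W - {i}" B] unfolding xs ys by auto
qed

lemma detach_leaf_in_plane_trees_deg:
  assumes T: "(E, rw, rb) \<in> plane_trees_deg W B d e" and fin: "finite W" and i: "i \<in> W"
    and nbrs_i: "nbrs_white E i = {j}" and \<sigma>: "cyclic_order_on (nbrs_black E j - {i}) \<sigma>"
  shows "(E - {(i, j)}, rw, rb(j := \<sigma>)) \<in> plane_trees_deg (W - {i}) B d (e(j := e j - 1))"
proof -
  have t: "bip_tree W B E" and cw: "\<forall>i'\<in>W. cyclic_order_on (nbrs_white E i') (rw i')"
    and rw_out: "\<forall>i'. i' \<notin> W \<longrightarrow> rw i' = id"
    and cb: "\<forall>j'\<in>B. cyclic_order_on (nbrs_black E j') (rb j')" and rb_out: "\<forall>j'. j' \<notin> B \<longrightarrow> rb j' = id"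
    and dw: "\<forall>i'\<in>W. card (nbrs_white E i') = d i'" and db: "\<forall>j'\<in>B. card (nbrs_black E j') = e j'"
    using T unfolding mem_plane_trees_deg_iff mem_plane_trees_iff by blast+
  let ?E = "E - {(i, j)}"
  have ij: "(i, j) \<in> E" using nbrs_i unfolding nbrs_white_def by blast
  then have j: "j \<in> B" using t unfolding bip_tree_def by blast
  have "rw i = id" using cw i nbrs_i cyclic_order_on_singleton_iff by metis
  then have "\<forall>i'. i' \<notin> W - {i} \<longrightarrow> rw i' = id" using rw_out by auto
  moreover have "bip_tree (W - {i}) B ?E" by (rule bip_tree_remove_leaf[OF t i nbrs_i])
  moreover have "card (nbrs_black ?E j') = (e(j := e j - 1)) j'" if "j' \<in> B" for j'
  proof (cases "j' = j")
    case True
    have "nbrs_black E j \<subseteq> W" using t unfolding bip_tree_def nbrs_black_def by blast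
    then have "finite (nbrs_black E j)" using fin by (rule finite_subset)
    moreover have "i \<in> nbrs_black E j" using ij unfolding nbrs_black_def by simp
    ultimately show ?thesis using True db j by (simp add: nbrs_black_Diff)
  next
    case False
    then show ?thesis using db that by (simp add: nbrs_black_Diff)
  qed
  ultimately show ?thesis
    using cw cb rb_out dw j \<sigma> by (simp add: mem_plane_trees_deg_iff mem_plane_trees_iff nbrs_white_Diff nbrs_black_Diff)
qed

lemma plane_trees_deg_detach_leaf:
  assumes fin: "finite W" and T: "T \<in> plane_trees_deg W B d e"
    and i: "i \<in> W" and di: "d i = 1" and W2: "2 \<le> card W"
  obtains j T' p where "j \<in> B" and "T' \<in> plane_trees_deg (W - {i}) B d (e(j := e j - 1))"
    and "p \<in> nbrs_black (fst T') j" and "T = attach_leaf i j p T'"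
proof -
  obtain E rw rb where TE: "T = (E, rw, rb)" by (cases T)
  have t: "bip_tree W B E" and cb: "\<forall>j'\<in>B. cyclic_order_on (nbrs_black E j') (rb j')"
    and "card (nbrs_white E i) = 1"
    using T i di unfolding TE mem_plane_trees_deg_iff mem_plane_trees_iff by auto
  then obtain j where nbrs_i: "nbrs_white E i = {j}" by (metis card_1_singletonE)
  then have ij: "(i, j) \<in> E" unfolding nbrs_white_def by blast
  then have j: "j \<in> B" using t unfolding bip_tree_def by blast
  define S where "S = nbrs_black E j - {i}"
  have "nbrs_black E j \<noteq> {i}"
    using bip_tree_isolated_edge[OF t i nbrs_i] W2 by auto
  then have S: "S \<noteq> {}" "i \<notin> S" "insert i S = nbrs_black E j"
    using ij unfolding S_def nbrs_black_def by auto
  then obtain p where p: "p \<in> S" and \<sigma>: "cyclic_order_on S (rb j \<circ> transpose p i)"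
    using cyclic_order_on_remove[of i S "rb j"] cb j by metis
  let ?T' = "(E - {(i, j)}, rw, rb(j := rb j \<circ> transpose p i))"
  have "?T' \<in> plane_trees_deg (W - {i}) B d (e(j := e j - 1))"
    using detach_leaf_in_plane_trees_deg[OF T[unfolded TE] fin i nbrs_i] \<sigma> unfolding S_def by blast
  moreover have "p \<in> nbrs_black (fst ?T') j" using p unfolding S_def by (simp add: nbrs_black_Diff)
  moreover have "T = attach_leaf i j p ?T'"
    using ij by (simp add: TE attach_leaf_def insert_absorb comp_assoc)
  ultimately show thesis using j that by blast
qed

lemma bij_betw_attach_leaf:
  assumes fW: "finite W" and i: "i \<in> W" and di: "d i = 1" and W2: "2 \<le> card W"
  shows "bij_betw (\<lambda>(j, T, p). attach_leaf i j p T)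
    (SIGMA j:B. SIGMA T:plane_trees_deg (W - {i}) B d (e(j := e j - 1)). nbrs_black (fst T) j)
    (plane_trees_deg W B d e)"
  (is "bij_betw ?f ?A _")
proof -
  have "inj_on ?f ?A"
    by (rule inj_on_subset[OF inj_on_attach_leaf]) (auto simp: plane_trees_deg_def)
  moreover have "?f ` ?A \<subseteq> plane_trees_deg W B d e"
  proof (rule image_subsetI)
    fix x assume x: "x \<in> ?A"
    obtain j E rw rb p where xs: "x = (j, (E, rw, rb), p)" by (cases x) (metis prod_cases3)
    from x show "?f x \<in> plane_trees_deg W B d e"
      using attach_leaf_in_plane_trees_deg[of W i d, OF fW i di] unfolding xs by auto
  qed
  moreover have "plane_trees_deg W B d e \<subseteq> ?f ` ?A"
  proof
    fix T assume "T \<in> plane_trees_deg W B d e"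
    then obtain j T' p where "j \<in> B" "T' \<in> plane_trees_deg (W - {i}) B d (e(j := e j - 1))"
      and "p \<in> nbrs_black (fst T') j" and T: "T = attach_leaf i j p T'"
      by (rule plane_trees_deg_detach_leaf[of W _ B d e i, OF fW _ i di W2])
    then have "(j, T', p) \<in> ?A" by simp
    moreover have "T = ?f (j, T', p)" using T by simp
    ultimately show "T \<in> ?f ` ?A" by (rule rev_image_eqI)
  qed
  ultimately show ?thesis unfolding bij_betw_def by blast
qed

lemma card_plane_trees_deg_leaf:
  assumes fW: "finite W" and fB: "finite B" and i: "i \<in> W" and di: "d i = 1" and W2: "2 \<le> card W"
  shows "card (plane_trees_deg W B d e) =
    (\<Sum>j\<in>B. (e j - 1) * card (plane_trees_deg (W - {i}) B d (e(j := e j - 1))))"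
proof -
  define F where "F j = plane_trees_deg (W - {i}) B d (e(j := e j - 1))" for j
  have fin_F: "finite (F j)" for j unfolding F_def using fW fB by (simp add: finite_plane_trees_deg)
  have fin_nbrs: "finite (nbrs_black (fst T) j)" if "T \<in> F j" for T j
    using that finite_nbrs_black[of T "W - {i}" B j] fW unfolding F_def plane_trees_deg_def by simp
  have "card (plane_trees_deg W B d e) = card (SIGMA j:B. SIGMA T:F j. nbrs_black (fst T) j)"
    unfolding F_def by (rule bij_betw_same_card[OF bij_betw_attach_leaf[where d = d and e = e, OF fW i di W2], symmetric])
  also have "\<dots> = (\<Sum>j\<in>B. \<Sum>T\<in>F j. card (nbrs_black (fst T) j))"
    using fB fin_F fin_nbrs by (simp add: card_SigmaI finite_SigmaI)
  also have "\<dots> = (\<Sum>j\<in>B. (e j - 1) * card (F j))"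
  proof (rule sum.cong[OF refl])
    fix j assume j: "j \<in> B"
    have "card (nbrs_black (fst T) j) = e j - 1" if "T \<in> F j" for T
      using that j unfolding F_def plane_trees_deg_def by auto
    then show "(\<Sum>T\<in>F j. card (nbrs_black (fst T) j)) = (e j - 1) * card (F j)" by simp
  qed
  finally show ?thesis unfolding F_def .
qed

section \<open>Counting plane trees with given degrees\<close>

definition admissible_degrees :: "nat set \<Rightarrow> nat set \<Rightarrow> (nat \<Rightarrow> nat) \<Rightarrow> (nat \<Rightarrow> nat) \<Rightarrow> bool" where
  "admissible_degrees W B d e \<longleftrightarrow> (\<forall>i\<in>W. 1 \<le> d i) \<and> (\<forall>j\<in>B. 1 \<le> e j) \<and>
     sum d W = card W + card B - 1 \<and> sum e B = card W + card B - 1"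

definition plane_tree_count :: "nat set \<Rightarrow> nat set \<Rightarrow> (nat \<Rightarrow> nat) \<Rightarrow> (nat \<Rightarrow> nat) \<Rightarrow> nat" where
  "plane_tree_count W B d e =
     (if admissible_degrees W B d e then fact (card W - 1) * fact (card B - 1) else 0)"

lemma plane_tree_count_swap: "plane_tree_count B W e d = plane_tree_count W B d e"
  unfolding plane_tree_count_def admissible_degrees_def by (auto simp: add.commute mult.commute)

lemma admissible_degrees_remove_leaf:
  assumes fW: "finite W" and fB: "finite B" and i: "i \<in> W" and W2: "2 \<le> card W" and di: "d i = 1"
    and j: "j \<in> B" and ej: "2 \<le> e j"
  shows "admissible_degrees (W - {i}) B d (e(j := e j - 1)) \<longleftrightarrow> admissible_degrees W B d e"
proof -
  have d_sum: "sum d W = sum d (W - {i}) + 1" using sum.remove[OF fW i, of d] di by simp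
  have "sum (e(j := e j - 1)) (B - {j}) = sum e (B - {j})" by (rule sum.cong) auto
  then have e_sum: "sum (e(j := e j - 1)) B + 1 = sum e B"
    using sum.remove[OF fB j, of e] sum.remove[OF fB j, of "e(j := e j - 1)"] ej by simp
  have "(\<forall>i'\<in>W - {i}. 1 \<le> d i') \<longleftrightarrow> (\<forall>i'\<in>W. 1 \<le> d i')" using di by auto
  moreover have "1 \<le> (e(j := e j - 1)) j' \<longleftrightarrow> 1 \<le> e j'" for j' using ej by (cases "j' = j") auto
  moreover have "card (W - {i}) = card W - 1" using i by simp
  ultimately show ?thesis
    unfolding admissible_degrees_def using W2 d_sum e_sum by (simp only:) linarith
qed

lemma plane_tree_count_leaf_recursion:
  assumes fW: "finite W" and fB: "finite B" and i: "i \<in> W" and di: "d i = 1" and W2: "2 \<le> card W"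
  shows "(\<Sum>j\<in>B. (e j - 1) * plane_tree_count (W - {i}) B d (e(j := e j - 1))) = plane_tree_count W B d e"
proof -
  let ?c = "if admissible_degrees W B d e then fact (card W - 2) * fact (card B - 1) else 0 :: nat"
  have "(e j - 1) * plane_tree_count (W - {i}) B d (e(j := e j - 1)) = (e j - 1) * ?c" if "j \<in> B" for j
  proof (cases "2 \<le> e j")
    case True
    then show ?thesis
      using admissible_degrees_remove_leaf[where d = d and e = e, OF fW fB i W2 di that True] i
      by (simp add: plane_tree_count_def numeral_2_eq_2)
  qed simp
  then have "(\<Sum>j\<in>B. (e j - 1) * plane_tree_count (W - {i}) B d (e(j := e j - 1))) = (\<Sum>j\<in>B. (e j - 1) * ?c)"
    by (rule sum.cong[OF refl])
  also have "\<dots> = (\<Sum>j\<in>B. e j - 1) * ?c" by (rule sum_distrib_right[symmetric])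
  also have "\<dots> = plane_tree_count W B d e"
  proof (cases "admissible_degrees W B d e")
    case True
    then have e1: "\<forall>j\<in>B. 1 \<le> e j" and se: "sum e B = card W + card B - 1"
      unfolding admissible_degrees_def by auto
    have "(\<Sum>j\<in>B. e j - 1) + card B = (\<Sum>j\<in>B. (e j - 1) + 1)" by (subst sum.distrib) simp
    also have "\<dots> = sum e B" using e1 by (intro sum.cong) auto
    finally have "(\<Sum>j\<in>B. e j - 1) = card W - 1" using se by simp
    moreover obtain k where "card W = Suc (Suc k)" using W2 by (metis add_2_eq_Suc le_Suc_ex)
    ultimately show ?thesis using True by (simp add: plane_tree_count_def algebra_simps)
  qed (simp add: plane_tree_count_def)
  finally show ?thesis .
qed

lemma card_plane_trees_deg_single_edge:
  assumes "card W = 1" and "card B = 1"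
  shows "card (plane_trees_deg W B d e) = plane_tree_count W B d e"
proof -
  obtain a b where W: "W = {a}" and B: "B = {b}" using assms by (meson card_1_singletonE)
  have "nbrs_white {(a, b)} a = {b}" "nbrs_black {(a, b)} b = {a}"
    unfolding nbrs_white_def nbrs_black_def by auto
  then have "plane_trees_deg W B d e = (if d a = 1 \<and> e b = 1 then {({(a, b)}, \<lambda>_. id, \<lambda>_. id)} else {})"
    unfolding plane_trees_deg_def W B plane_trees_single_edge by auto
  moreover have "admissible_degrees W B d e \<longleftrightarrow> d a = 1 \<and> e b = 1"
    unfolding admissible_degrees_def W B by auto
  ultimately show ?thesis unfolding plane_tree_count_def W B by simp
qed

lemma plane_trees_deg_empty_without_leaves:
  assumes fW: "finite W" and fB: "finite B" and W: "W \<noteq> {}" and B: "B \<noteq> {}"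
    and not_edge: "\<not> (card W = 1 \<and> card B = 1)"
    and no_white_leaf: "\<forall>i\<in>W. d i = 1 \<longrightarrow> card W < 2" and no_black_leaf: "\<forall>j\<in>B. e j = 1 \<longrightarrow> card B < 2"
  shows "plane_trees_deg W B d e = {}"
proof (rule ccontr)
  assume "plane_trees_deg W B d e \<noteq> {}"
  then obtain E rw rb where T: "(E, rw, rb) \<in> plane_trees_deg W B d e" by auto
  then have t: "bip_tree W B E" and deg_w: "\<forall>i\<in>W. card (nbrs_white E i) = d i"
    and deg_b: "\<forall>j\<in>B. card (nbrs_black E j) = e j"
    unfolding mem_plane_trees_deg_iff mem_plane_trees_iff by blast+
  from bip_tree_removable_leaf_exists[OF t fW fB W B not_edge] show False
  proof (elim disjE bexE conjE)
    fix i assume "i \<in> W" "card (nbrs_white E i) = 1" "2 \<le> card W"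
    then show False using deg_w no_white_leaf by auto
  next
    fix j assume "j \<in> B" "card (nbrs_black E j) = 1" "2 \<le> card B"
    then show False using deg_b no_black_leaf by auto
  qed
qed

lemma not_admissible_degrees_without_leaves:
  assumes fW: "finite W" and fB: "finite B" and W: "W \<noteq> {}" and B: "B \<noteq> {}"
    and not_edge: "\<not> (card W = 1 \<and> card B = 1)"
    and no_white_leaf: "\<forall>i\<in>W. d i = 1 \<longrightarrow> card W < 2" and no_black_leaf: "\<forall>j\<in>B. e j = 1 \<longrightarrow> card B < 2"
  shows "\<not> admissible_degrees W B d e"
proof
  assume adm: "admissible_degrees W B d e"
  have cW: "card W \<ge> 1" and cB: "card B \<ge> 1" using fW fB W B by (simp_all add: Suc_le_eq card_gt_0_iff)
  have W_bound: "2 * card W \<le> card W + card B - 1" if "2 \<le> card W"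
  proof -
    have "\<forall>i\<in>W. 2 \<le> d i" using adm no_white_leaf that unfolding admissible_degrees_def by force
    then have "(\<Sum>i\<in>W. 2) \<le> sum d W" by (intro sum_mono) blast
    then show ?thesis using adm unfolding admissible_degrees_def by simp
  qed
  have B_bound: "2 * card B \<le> card W + card B - 1" if "2 \<le> card B"
  proof -
    have "\<forall>j\<in>B. 2 \<le> e j" using adm no_black_leaf that unfolding admissible_degrees_def by force
    then have "(\<Sum>j\<in>B. 2) \<le> sum e B" by (intro sum_mono) blast
    then show ?thesis using adm unfolding admissible_degrees_def by simp
  qed
  show False
  proof (cases "2 \<le> card W")
    case True
    then show False using W_bound B_bound cB by (cases "2 \<le> card B") linarith+
  next
    case False
    then show False using B_bound not_edge cW cB by linarith
  qed
qed

lemma card_plane_trees_deg_white_leaf_step: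
  assumes IH: "\<And>d' e'. card (plane_trees_deg (W - {i}) B d' e') = plane_tree_count (W - {i}) B d' e'"
    and fW: "finite W" and fB: "finite B" and i: "i \<in> W" and di: "d i = 1" and W2: "2 \<le> card W"
  shows "card (plane_trees_deg W B d e) = plane_tree_count W B d e"
  using card_plane_trees_deg_leaf[where d = d and e = e, OF fW fB i di W2]
    plane_tree_count_leaf_recursion[where d = d and e = e, OF fW fB i di W2]
  by (simp add: IH)

lemma Diff_singleton_nonempty:
  assumes "2 \<le> card X"
  shows "X - {x} \<noteq> {}"
proof
  assume "X - {x} = {}"
  then have "card X \<le> card {x}" by (intro card_mono) auto
  with assms show False by simp
qed

theorem card_plane_trees_deg:
  assumes "finite W" and "finite B" and "W \<noteq> {}" and "B \<noteq> {}"
  shows "card (plane_trees_deg W B d e) = plane_tree_count W B d e"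
  using assms
proof (induction "card W + card B" arbitrary: W B d e rule: less_induct)
  case less
  note fW = less.prems(1) and fB = less.prems(2) and W = less.prems(3) and B = less.prems(4)
  consider (edge) "card W = 1 \<and> card B = 1"
    | (white_leaf) i where "i \<in> W" "d i = 1" "2 \<le> card W"
    | (black_leaf) j where "j \<in> B" "e j = 1" "2 \<le> card B"
    | (no_leaf) "\<not> (card W = 1 \<and> card B = 1)"
        "\<forall>i\<in>W. d i = 1 \<longrightarrow> card W < 2" "\<forall>j\<in>B. e j = 1 \<longrightarrow> card B < 2"
    by (metis not_le)
  then show ?case
  proof cases
    case edge
    then show ?thesis using card_plane_trees_deg_single_edge by blast
  next
    case (white_leaf i)
    have "card (plane_trees_deg (W - {i}) B d' e') = plane_tree_count (W - {i}) B d' e'" for d' e'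
      using less.hyps[of "W - {i}" B] card_Diff1_less[OF fW white_leaf(1)]
        Diff_singleton_nonempty[OF white_leaf(3)] fW fB B by simp
    then show ?thesis
      by (rule card_plane_trees_deg_white_leaf_step[where d = d, OF _ fW fB white_leaf])
  next
    case (black_leaf j)
    have "card (plane_trees_deg (B - {j}) W e' d') = plane_tree_count (B - {j}) W e' d'" for d' e'
      using less.hyps[of "B - {j}" W] card_Diff1_less[OF fB black_leaf(1)]
        Diff_singleton_nonempty[OF black_leaf(3)] fW fB W by simp
    then have "card (plane_trees_deg B W e d) = plane_tree_count B W e d"
      by (rule card_plane_trees_deg_white_leaf_step[where d = e, OF _ fB fW black_leaf])
    then show ?thesis by (simp add: card_plane_trees_deg_swap plane_tree_count_swap)
  next
    case no_leaf
    then show ?thesis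
      using plane_trees_deg_empty_without_leaves[OF fW fB W B] not_admissible_degrees_without_leaves[OF fW fB W B]
      by (simp add: plane_tree_count_def)
  qed
qed

section \<open>Summing over the degree sequences\<close>

definition compositions :: "nat set \<Rightarrow> nat \<Rightarrow> (nat \<Rightarrow> nat) set" where
  "compositions A s = {d. (\<forall>i. i \<notin> A \<longrightarrow> d i = 0) \<and> (\<forall>i\<in>A. 1 \<le> d i) \<and> sum d A = s}"

lemma sum_list_map_upt: "sum_list (map f [0..<k]) = sum f {..<k}"
  by (simp add: sum_list_distinct_conv_sum_set lessThan_atLeast0)

lemma card_compositions:
  assumes "1 \<le> k" and "k \<le> s"
  shows "card (compositions {..<k} s) = (s - 1) choose (k - 1)"
proof -
  let ?L = "{l :: nat list. length l = k \<and> sum_list l = s - k}"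
  let ?f = "\<lambda>d. map (\<lambda>i. d i - 1) [0..<k]" and ?g = "\<lambda>l i. if i < k then l ! i + 1 else 0"
  have "bij_betw ?f (compositions {..<k} s) ?L"
  proof (rule bij_betw_byWitness[where f' = ?g])
    show "\<forall>d\<in>compositions {..<k} s. ?g (?f d) = d"
      unfolding compositions_def Ball_def lessThan_iff by (auto simp: fun_eq_iff)
    show "\<forall>l\<in>?L. ?f (?g l) = l"
      by (auto intro: nth_equalityI)
    show "?f ` compositions {..<k} s \<subseteq> ?L"
    proof (rule image_subsetI)
      fix d assume "d \<in> compositions {..<k} s"
      then have "\<forall>i\<in>{..<k}. 1 \<le> d i" "sum d {..<k} = s" unfolding compositions_def by auto
      then have "sum (\<lambda>i. d i - 1) {..<k} = s - k" by (subst sum_subtractf_nat) auto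
      then show "?f d \<in> ?L" by (simp add: sum_list_map_upt)
    qed
    show "?g ` ?L \<subseteq> compositions {..<k} s"
    proof (rule image_subsetI)
      fix l :: "nat list" assume "l \<in> ?L"
      then have l: "length l = k" "sum_list l = s - k" by simp_all
      have "sum (?g l) {..<k} = sum (\<lambda>i. l ! i + 1) {..<k}" by (rule sum.cong) auto
      also have "\<dots> = sum ((!) l) {..<k} + k" by (subst sum.distrib) simp
      also have "\<dots> = sum_list l + k"
        using l(1) sum_list_map_upt[of "(!) l" k] map_nth[of l] by simp
      finally show "?g l \<in> compositions {..<k} s" using l assms unfolding compositions_def by auto
    qed
  qed
  then have "card (compositions {..<k} s) = card ?L" by (rule bij_betw_same_card)
  also have "\<dots> = (s - k + k - 1) choose (s - k)" by (rule card_length_sum_list)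
  also have "\<dots> = (s - 1) choose (k - 1)"
    using assms binomial_symmetric[of "s - k" "s - 1"] by simp
  finally show ?thesis .
qed

lemma finite_compositions: "finite A \<Longrightarrow> finite (compositions A s)"
proof -
  assume fin: "finite A"
  have "compositions A s \<subseteq> {d. \<forall>i. (i \<in> A \<longrightarrow> d i \<in> {..s}) \<and> (i \<notin> A \<longrightarrow> d i = 0)}"
    unfolding compositions_def using member_le_sum[OF _ _ fin] by fastforce
  moreover have "finite {d. \<forall>i. (i \<in> A \<longrightarrow> d i \<in> {..s}) \<and> (i \<notin> A \<longrightarrow> d i = (0::nat))}"
    using fin by (intro finite_set_of_finite_funs) simp_all
  ultimately show ?thesis by (rule finite_subset)
qed

definition degrees :: "plane_tree \<Rightarrow> (nat \<Rightarrow> nat) \<times> (nat \<Rightarrow> nat)" where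
  "degrees T = (\<lambda>i. card (nbrs_white (fst T) i), \<lambda>j. card (nbrs_black (fst T) j))"

lemma plane_trees_deg_eq:
  assumes "\<forall>i. i \<notin> W \<longrightarrow> d i = 0" and "\<forall>j. j \<notin> B \<longrightarrow> e j = 0"
  shows "plane_trees_deg W B d e = {T \<in> plane_trees W B. degrees T = (d, e)}"
proof -
  have "T \<in> plane_trees_deg W B d e \<longleftrightarrow> T \<in> plane_trees W B \<and> degrees T = (d, e)" for T
  proof (cases T)
    case (fields E rw rb)
    show ?thesis
      using plane_trees_edges_subset[of E rw rb W B] nbrs_white_eq_empty nbrs_black_eq_empty assms
      unfolding fields mem_plane_trees_deg_iff degrees_def by (auto simp: fun_eq_iff)
  qed
  then show ?thesis by blast
qed

lemma degrees_in_compositions: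
  assumes fW: "finite W" and fB: "finite B" and W: "W \<noteq> {}" and B: "B \<noteq> {}"
    and T: "T \<in> plane_trees W B"
  shows "degrees T \<in> compositions W (card W + card B - 1) \<times> compositions B (card W + card B - 1)"
proof -
  obtain d e where de: "degrees T = (d, e)" by fastforce
  have "T \<in> plane_trees_deg W B d e"
    using T de by (cases T) (auto simp: mem_plane_trees_deg_iff degrees_def)
  then have "plane_tree_count W B d e \<noteq> 0"
    using card_plane_trees_deg[OF fW fB W B, of d e] finite_plane_trees_deg[OF fW fB, of d e]
    by (metis card_0_eq empty_iff)
  then have "admissible_degrees W B d e" unfolding plane_tree_count_def by presburger
  moreover have sub: "fst T \<subseteq> W \<times> B" using T by (cases T) (simp add: plane_trees_edges_subset)
  then have "d i = 0" if "i \<notin> W" for i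
    using that de nbrs_white_eq_empty by (auto simp: degrees_def)
  moreover have "e j = 0" if "j \<notin> B" for j
    using that de nbrs_black_eq_empty sub by (auto simp: degrees_def)
  ultimately show ?thesis using de unfolding admissible_degrees_def compositions_def by auto
qed

lemma card_plane_trees:
  assumes fW: "finite W" and fB: "finite B" and W: "W \<noteq> {}" and B: "B \<noteq> {}"
  shows "card (plane_trees W B) =
    card (compositions W (card W + card B - 1)) * card (compositions B (card W + card B - 1)) *
    (fact (card W - 1) * fact (card B - 1))"
proof -
  let ?D = "compositions W (card W + card B - 1) \<times> compositions B (card W + card B - 1)"
  have "card (plane_trees W B) = (\<Sum>p\<in>?D. card {T \<in> plane_trees W B. degrees T = p})"
    using sum.group[of "plane_trees W B" ?D degrees "\<lambda>_. 1 :: nat"]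
      degrees_in_compositions[OF assms] fW fB
    by (simp add: finite_plane_trees finite_compositions image_subset_iff)
  also have "\<dots> = (\<Sum>p\<in>?D. card (plane_trees_deg W B (fst p) (snd p)))"
  proof (rule sum.cong[OF refl])
    fix p assume "p \<in> ?D"
    moreover obtain d e where p: "p = (d, e)" by fastforce
    ultimately have "\<forall>i. i \<notin> W \<longrightarrow> d i = 0" "\<forall>j. j \<notin> B \<longrightarrow> e j = 0"
      unfolding compositions_def by auto
    then show "card {T \<in> plane_trees W B. degrees T = p} = card (plane_trees_deg W B (fst p) (snd p))"
      unfolding p by (simp add: plane_trees_deg_eq)
  qed
  also have "\<dots> = (\<Sum>p\<in>?D. fact (card W - 1) * fact (card B - 1))"
    using card_plane_trees_deg[OF fW fB W B]
    by (intro sum.cong) (auto simp: plane_tree_count_def admissible_degrees_def compositions_def)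
  finally show ?thesis by (simp add: card_cartesian_product)
qed

lemma binomial_fact_pair:
  assumes "a + b = N"
  shows "(N choose a) * (N choose b) * (fact a * fact b) * (fact a * fact b) = (fact N ^ 2 :: nat)"
proof -
  have "N - a = b" "N - b = a" using assms by auto
  then have "fact a * fact b * (N choose a) = (fact N :: nat)"
    and "fact b * fact a * (N choose b) = (fact N :: nat)"
    using binomial_fact_lemma[of a N] binomial_fact_lemma[of b N] assms by simp_all
  then show ?thesis by (simp add: power2_eq_square algebra_simps)
qed

theorem theorem2p1:
  fixes n m :: nat
  assumes "n \<ge> 1" and "m \<ge> 1"
  shows "real (card (plane_labelled_bip_trees n m)) =
         (fact (n + m - 2))^2 / (fact (n - 1) * fact (m - 1))"
proof -
  have "{..<n} \<noteq> {}" "{..<m} \<noteq> {}" using assms by (auto simp: lessThan_empty_iff)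
  then have "card (plane_labelled_bip_trees n m) =
      (n + m - 2 choose (n - 1)) * (n + m - 2 choose (m - 1)) * (fact (n - 1) * fact (m - 1))"
    using card_plane_trees[of "{..<n}" "{..<m}"] card_compositions[of n "n + m - 1"]
      card_compositions[of m "n + m - 1"] assms
    by (simp add: plane_labelled_bip_trees_eq numeral_2_eq_2)
  then have "card (plane_labelled_bip_trees n m) * (fact (n - 1) * fact (m - 1)) = fact (n + m - 2) ^ 2"
    using binomial_fact_pair[of "n - 1" "m - 1" "n + m - 2"] assms by simp
  then have "real (card (plane_labelled_bip_trees n m)) * (fact (n - 1) * fact (m - 1)) =
      fact (n + m - 2) ^ 2"
    by (metis of_nat_fact of_nat_mult of_nat_power)
  then show ?thesis by (simp add: field_simps)
qed

end
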